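(* Consider the static power control game with $K\ge 2$ transmitters described in the context, for a fixed realization of the channel gains $g_1,\dots,g_K$. Let $\mathcal{U}_{\mathcal{G}}=\{(u_1(\underline{p}),\dots,u_K(\underline{p})) : \underline{p}\in \prod_{i=1}^K(0,P_i^{\max}]\}$ be the achievable utility region, let $u^{\max}$ be an upper bound on the utilities of all transmitters (so $\mathcal{U}_{\mathcal{G}}\subseteq[0,u^{\max}]^K$), and let $\mathcal{U}_{\mathcal{G}}^C=[0,u^{\max}]^K\setminus\mathcal{U}_{\mathcal{G}}$. If $\mathcal{U}_{\mathcal{G}}$ is convex or $\mathcal{U}_{\mathcal{G}}^C$ is convex, then the utility vector $\underline{u}(\tilde{\underline{p}})=(u_1(\tilde{\underline{p}}),\dots,u_K(\tilde{\underline{p}}))$ is Pareto-optimal, i.e. there is no feasible power profile $\underline{p}$ with $u_i(\underline{p})\ge u_i(\tilde{\underline{p}})$ for all $i$ and strict inequality for some $i$.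
   Context: There are $K\ge2$ transmitters $i\in\mathcal{K}=\{1,\dots,K\}$ sending to one receiver; $\sigma^2>0$ is the noise variance; transmitter $i$ has complex channel gain $g_i$ with $|g_i|^2>0$, transmission rate $R_i>0$, and chooses a transmit power $p_i\in[0,P_i^{\max}]$. For a power profile $\underline{p}=(p_1,\dots,p_K)$, $\mathrm{SINR}_i=\frac{p_i|g_i|^2}{\sum_{j\neq i}p_j|g_j|^2+\sigma^2}$ and the utility (energy efficiency) of transmitter $i$ is $u_i(\underline{p})=\frac{R_i f(\mathrm{SINR}_i)}{p_i}$, where $f$ is a sigmoidal efficiency function (the block success rate), common to all users, with $f(0)=0$. It is assumed that there exists $x_0\in\,]0,\frac{1}{K-1}[$ such that $\frac{f''(x)}{f'(x)}-\frac{2(K-1)}{1-(K-1)x}$ is strictly positive on $]0,x_0[$ and strictly negative on $]x_0,\frac1{K-1}[$; under this assumption $\tilde\gamma$ denotes the unique solution in $]0,\frac1{K-1}[$ of $x[1-(K-1)x]f'(x)-f(x)=0$. The operating point is the power profile $\tilde{\underline{p}}$ with $\tilde p_i=\frac{\sigma^2}{|g_i|^2}\frac{\tilde\gamma}{1-(K-1)\tilde\gamma}$ for all $i$ (it gives every user SINR $\tilde\gamma$); the maximal powers $P_i^{\max}$ are assumed large enough that $\tilde p_i\le P_i^{\max}$. *)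

theory Defs
  imports "HOL-Analysis.Analysis"
begin

text \<open>Users are indexed by a finite type 'k; K = CARD('k).
  Power profiles are vectors p :: real^'k.\<close>

definition SINR :: "real \<Rightarrow> complex^'k \<Rightarrow> real^'k \<Rightarrow> 'k \<Rightarrow> real" where
  "SINR sigma2 g p i =
     p$i * (cmod (g$i))^2 / ((\<Sum>j\<in>UNIV - {i}. p$j * (cmod (g$j))^2) + sigma2)"

definition util :: "real^'k \<Rightarrow> (real \<Rightarrow> real) \<Rightarrow> real \<Rightarrow> complex^'k \<Rightarrow> real^'k \<Rightarrow> 'k \<Rightarrow> real" where
  "util R f sigma2 g p i = R$i * f (SINR sigma2 g p i) / p$i"

definition util_vec :: "real^'k \<Rightarrow> (real \<Rightarrow> real) \<Rightarrow> real \<Rightarrow> complex^'k \<Rightarrow> real^'k \<Rightarrow> real^'k" where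
  "util_vec R f sigma2 g p = (\<chi> i. util R f sigma2 g p i)"

definition feasible :: "real^'k \<Rightarrow> (real^'k) set" where
  "feasible Pmax = {p. \<forall>i. 0 < p$i \<and> p$i \<le> Pmax$i}"

definition util_region :: "real^'k \<Rightarrow> (real \<Rightarrow> real) \<Rightarrow> real \<Rightarrow> complex^'k \<Rightarrow> real^'k \<Rightarrow> (real^'k) set" where
  "util_region R f sigma2 g Pmax = util_vec R f sigma2 g ` feasible Pmax"

definition sigmoidal :: "(real \<Rightarrow> real) \<Rightarrow> bool" where
  "sigmoidal f \<longleftrightarrow>
     continuous_on {0..} f \<and>
     (\<forall>x>0. f differentiable (at x)) \<and>
     (\<forall>x>0. deriv f differentiable (at x)) \<and>
     strict_mono_on {0..} f \<and>
     (\<forall>x\<ge>0. 0 \<le> f x \<and> f x \<le> 1) \<and>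
     (\<exists>c>0. (\<forall>x. 0 < x \<and> x < c \<longrightarrow> deriv (deriv f) x \<ge> 0) \<and>
            (\<forall>x. c < x \<longrightarrow> deriv (deriv f) x \<le> 0)) \<and>
     (f \<longlongrightarrow> 1) at_top"

definition gamma_tilde :: "(real \<Rightarrow> real) \<Rightarrow> nat \<Rightarrow> real" where
  "gamma_tilde f K = (THE x. 0 < x \<and> x < 1 / (real K - 1) \<and>
       x * (1 - (real K - 1) * x) * deriv f x - f x = 0)"

definition p_tilde :: "(real \<Rightarrow> real) \<Rightarrow> real \<Rightarrow> complex^'k \<Rightarrow> real^'k" where
  "p_tilde f sigma2 g = (\<chi> i. sigma2 / (cmod (g$i))^2 *
      (gamma_tilde f CARD('k) / (1 - (real CARD('k) - 1) * gamma_tilde f CARD('k))))"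

end

theory Submission
  imports Defs
begin

text \<open>
  Let user \<open>i\<close> have the smallest received power \<open>w = p\<^sub>i|g\<^sub>i|\<^sup>2\<close>. Every other user
  interferes with at least \<open>w\<close>, so \<open>SINR\<^sub>i \<le> s = w / ((K-1) w + \<sigma>\<^sup>2)\<close> and
  \<open>u\<^sub>i \<le> R\<^sub>i|g\<^sub>i|\<^sup>2/\<sigma>\<^sup>2 \<cdot> \<phi>(s)\<close> with \<open>\<phi>(x) = f(x)(1-(K-1)x)/x\<close>, with equality only if all
  received powers are equal. The sign condition on \<open>f''/f' - 2(K-1)/(1-(K-1)x)\<close> makes the
  numerator of \<open>\<phi>'\<close> first increase and then strictly decrease, so it changes sign exactly once,
  at \<open>\<gamma>\<close>, which is therefore the unique maximiser of \<open>\<phi>\<close> on \<open>(0, 1/(K-1))\<close>. At the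
  operating point every user attains \<open>R\<^sub>i|g\<^sub>i|\<^sup>2/\<sigma>\<^sup>2 \<cdot> \<phi>(\<gamma>)\<close>; so if user \<open>i\<close> does at
  least as well under some profile, then \<open>s = \<gamma>\<close>, all received powers are equal, and the
  profile is the operating point itself.
\<close>

text \<open>\<open>eff_ratio (K-1) f s\<close> is, up to the factor \<open>R\<^sub>i|g\<^sub>i|\<^sup>2/\<sigma>\<^sup>2\<close>, the utility of user \<open>i\<close>
  when all received powers are equal and hence every SINR equals \<open>s\<close>.\<close>
definition eff_ratio :: "real \<Rightarrow> (real \<Rightarrow> real) \<Rightarrow> real \<Rightarrow> real" where
  "eff_ratio k f x = f x * (1 - k * x) / x"

definition eff_ratio_numer :: "real \<Rightarrow> (real \<Rightarrow> real) \<Rightarrow> real \<Rightarrow> real" where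
  "eff_ratio_numer k f x = x * (1 - k * x) * deriv f x - f x"

lemma DERIV_nonpos_imp_strictly_decreasing:
  fixes h h' :: "real \<Rightarrow> real"
  assumes deriv: "\<And>x. a \<le> x \<Longrightarrow> x \<le> b \<Longrightarrow> (h has_real_derivative h' x) (at x)"
    and nonpos: "\<And>x. a < x \<Longrightarrow> x < b \<Longrightarrow> h' x \<le> 0"
    and neg_between: "\<And>x y. a \<le> x \<Longrightarrow> x < y \<Longrightarrow> y \<le> b \<Longrightarrow> \<exists>z. x < z \<and> z < y \<and> h' z < 0"
    and xy: "a \<le> x" "x < y" "y \<le> b"
  shows "h y < h x"
proof -
  have nonincreasing: "h v \<le> h u" if "a \<le> u" "u \<le> v" "v \<le> b" for u v
  proof (rule DERIV_nonpos_imp_decreasing_open[OF \<open>u \<le> v\<close>])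
    show "\<exists>y. (h has_real_derivative y) (at x) \<and> y \<le> 0" if "u < x" "x < v" for x
      using deriv[of x] nonpos[of x] that \<open>a \<le> u\<close> \<open>v \<le> b\<close> by auto
    show "continuous_on {u..v} h"
      using that by (intro continuous_at_imp_continuous_on ballI DERIV_isCont[OF deriv]) auto
  qed
  obtain z where z: "x < z" "z < y" "h' z < 0"
    using neg_between xy by blast
  obtain d where "d > 0" and d: "\<And>t. 0 < t \<Longrightarrow> t < d \<Longrightarrow> h (z + t) < h z"
    using DERIV_neg_dec_right[OF deriv \<open>h' z < 0\<close>] z xy by auto
  define t where "t = min (d / 2) (y - z)"
  have t: "0 < t" "t < d" "z + t \<le> y"
    using \<open>d > 0\<close> z unfolding t_def by auto
  have "h y \<le> h (z + t)" using nonincreasing t z xy by simp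
  also have "\<dots> < h z" using d t by simp
  also have "\<dots> \<le> h x" using nonincreasing z xy by simp
  finally show ?thesis .
qed

lemma DERIV_sign_change_imp_strict_max:
  fixes \<phi> \<phi>' :: "real \<Rightarrow> real"
  assumes deriv: "\<And>x. a < x \<Longrightarrow> x < b \<Longrightarrow> (\<phi> has_real_derivative \<phi>' x) (at x)"
    and "a < c" "c < b"
    and pos: "\<And>x. a < x \<Longrightarrow> x < c \<Longrightarrow> \<phi>' x > 0"
    and neg: "\<And>x. c < x \<Longrightarrow> x < b \<Longrightarrow> \<phi>' x < 0"
    and x: "a < x" "x < b" "x \<noteq> c"
  shows "\<phi> x < \<phi> c"
proof -
  have cont: "continuous_on {u..v} \<phi>" if "a < u" "v < b" for u v
    using that by (intro continuous_at_imp_continuous_on ballI DERIV_isCont[OF deriv]) auto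
  show ?thesis
  proof (cases "x < c")
    case True
    show ?thesis
    proof (rule DERIV_pos_imp_increasing_open[OF True _ cont])
      show "\<exists>y. (\<phi> has_real_derivative y) (at t) \<and> y > 0" if "x < t" "t < c" for t
        using deriv[of t] pos[of t] that x \<open>c < b\<close> by auto
    qed (use x \<open>c < b\<close> in auto)
  next
    case False
    then have "c < x" using x by simp
    show ?thesis
    proof (rule DERIV_neg_imp_decreasing_open[OF \<open>c < x\<close> _ cont])
      show "\<exists>y. (\<phi> has_real_derivative y) (at t) \<and> y < 0" if "c < t" "t < x" for t
        using deriv[of t] neg[of t] that x \<open>a < c\<close> by auto
    qed (use x \<open>a < c\<close> in auto)
  qed
qed

context
  fixes f :: "real \<Rightarrow> real" and k x0 :: real
  assumes k_pos: "0 < k"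
    and f_cont: "continuous_on {0..} f"
    and f_diff: "\<forall>x>0. f differentiable (at x)"
    and f'_diff: "\<forall>x>0. deriv f differentiable (at x)"
    and f_mono: "strict_mono_on {0..} f"
    and f0: "f 0 = 0"
    and x0: "0 < x0" "x0 < 1 / k"
    and below_x0: "\<forall>x. 0 < x \<and> x < x0 \<longrightarrow>
          deriv (deriv f) x / deriv f x - 2 * k / (1 - k * x) > 0"
    and above_x0: "\<forall>x. x0 < x \<and> x < 1 / k \<longrightarrow>
          deriv (deriv f) x / deriv f x - 2 * k / (1 - k * x) < 0"
begin

private lemma f_has_deriv: "0 < x \<Longrightarrow> (f has_real_derivative deriv f x) (at x)"
  using f_diff DERIV_deriv_iff_real_differentiable by blast

private lemma deriv_f_has_deriv: "0 < x \<Longrightarrow> (deriv f has_real_derivative deriv (deriv f) x) (at x)"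
  using f'_diff DERIV_deriv_iff_real_differentiable by blast

private lemma f_less: "0 \<le> x \<Longrightarrow> x < y \<Longrightarrow> f x < f y"
  using f_mono by (auto simp: strict_mono_on_def)

private lemma deriv_f_nonneg: "0 < x \<Longrightarrow> 0 \<le> deriv f x"
  by (rule mono_on_imp_deriv_nonneg[OF strict_mono_on_imp_mono_on[OF f_mono] f_has_deriv]) auto

private lemma one_minus_k_pos: "x < 1 / k \<Longrightarrow> 0 < 1 - k * x"
  using k_pos by (simp add: field_simps)

lemma eff_ratio_numer_has_deriv:
  assumes "0 < x"
  shows "(eff_ratio_numer k f has_real_derivative
            x * ((1 - k * x) * deriv (deriv f) x - 2 * k * deriv f x)) (at x)"
proof -
  have "(eff_ratio_numer k f has_real_derivative
          (1 * (1 - k * x) + x * - k) * deriv f x + x * (1 - k * x) * deriv (deriv f) x - deriv f x) (at x)"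
    unfolding eff_ratio_numer_def[abs_def]
    by (rule derivative_eq_intros f_has_deriv deriv_f_has_deriv assms refl | simp)+
  then show ?thesis by (simp add: algebra_simps)
qed

lemma eff_ratio_has_deriv:
  assumes "0 < x"
  shows "(eff_ratio k f has_real_derivative eff_ratio_numer k f x / x\<^sup>2) (at x)"
proof -
  have "(eff_ratio k f has_real_derivative
          ((deriv f x * (1 - k * x) + f x * - k) * x - f x * (1 - k * x) * 1) / (x * x)) (at x)"
    unfolding eff_ratio_def[abs_def]
    by (rule derivative_eq_intros f_has_deriv assms refl | use assms in simp)+
  then show ?thesis
    by (simp add: eff_ratio_numer_def power2_eq_square algebra_simps)
qed

lemma eff_ratio_numer_slope_pos:
  assumes "0 < x" "x < x0"
  shows "0 < (1 - k * x) * deriv (deriv f) x - 2 * k * deriv f x"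
proof -
  have c: "0 < 1 - k * x" using assms x0 by (intro one_minus_k_pos) simp
  have e: "2 * k / (1 - k * x) < deriv (deriv f) x / deriv f x"
    using below_x0 assms by auto
  \<comment> \<open>with \<open>deriv f x = 0\<close> the quotient would be \<open>0\<close> (division by zero), violating \<open>e\<close>\<close>
  have "0 < 2 * k / (1 - k * x)" using c k_pos by simp
  with e have "deriv f x \<noteq> 0" by auto
  with deriv_f_nonneg[OF \<open>0 < x\<close>] have "0 < deriv f x" by simp
  with e c show ?thesis by (simp add: field_simps)
qed

lemma eff_ratio_numer_slope_nonpos:
  assumes "x0 < x" "x < 1 / k"
  shows "(1 - k * x) * deriv (deriv f) x - 2 * k * deriv f x \<le> 0"
    and "0 < deriv f x \<Longrightarrow> (1 - k * x) * deriv (deriv f) x - 2 * k * deriv f x < 0"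
proof -
  have "0 < x" using assms x0 by simp
  have c: "0 < 1 - k * x" using assms by (intro one_minus_k_pos)
  have e: "deriv (deriv f) x / deriv f x < 2 * k / (1 - k * x)"
    using above_x0 assms by auto
  show neg: "(1 - k * x) * deriv (deriv f) x - 2 * k * deriv f x < 0" if "0 < deriv f x"
    using e c that by (simp add: field_simps)
  show "(1 - k * x) * deriv (deriv f) x - 2 * k * deriv f x \<le> 0"
  proof (cases "0 < deriv f x")
    case False
    then have "deriv f x = 0" using deriv_f_nonneg[OF \<open>0 < x\<close>] by simp
    \<comment> \<open>then x is a local minimum of the nonnegative function deriv f\<close>
    moreover have "deriv (deriv f) x = 0"
      by (rule DERIV_local_min[OF deriv_f_has_deriv[OF \<open>0 < x\<close>], of x])
        (use \<open>0 < x\<close> \<open>deriv f x = 0\<close> deriv_f_nonneg in auto)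
    ultimately show ?thesis by simp
  qed (use neg in simp)
qed

lemma eff_ratio_numer_cont: "0 < a \<Longrightarrow> continuous_on {a..b} (eff_ratio_numer k f)"
  by (intro continuous_at_imp_continuous_on ballI DERIV_isCont[OF eff_ratio_numer_has_deriv]) auto

lemma eff_ratio_numer_increasing:
  assumes "0 < a" "a < b" "b \<le> x0"
  shows "eff_ratio_numer k f a < eff_ratio_numer k f b"
proof (rule DERIV_pos_imp_increasing_open[OF \<open>a < b\<close> _ eff_ratio_numer_cont[OF \<open>0 < a\<close>]])
  fix x assume "a < x" "x < b"
  with assms show "\<exists>y. (eff_ratio_numer k f has_real_derivative y) (at x) \<and> 0 < y"
    using eff_ratio_numer_has_deriv eff_ratio_numer_slope_pos by force
qed

lemma eff_ratio_numer_pos: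
  assumes "0 < y" "y \<le> x0"
  shows "0 < eff_ratio_numer k f y"
proof (rule ccontr)
  assume "\<not> 0 < eff_ratio_numer k f y"
  then have neg: "eff_ratio_numer k f (y / 2) < 0"
    using eff_ratio_numer_increasing[of "y / 2" y] assms by simp
  have "continuous (at 0 within {0..}) f"
    using f_cont by (simp add: continuous_on_eq_continuous_within)
  then have "(f \<longlongrightarrow> f 0) (at 0 within {0..})"
    by (simp add: continuous_within)
  then have "(f \<longlongrightarrow> 0) (at_right 0)"
    using f0 by (auto elim: tendsto_within_subset)
  \<comment> \<open>near 0 the numerator lies between -f x, which tends to 0, and its negative value at y/2\<close>
  have lower: "- f x \<le> eff_ratio_numer k f x" if "0 < x" "x < y / 2" for x
    using that assms x0 one_minus_k_pos[of x] deriv_f_nonneg[of x]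
    by (simp add: eff_ratio_numer_def)
  have upper: "eff_ratio_numer k f x < eff_ratio_numer k f (y / 2)" if "0 < x" "x < y / 2" for x
    using that assms eff_ratio_numer_increasing[of x "y / 2"] by simp
  have "\<forall>\<^sub>F x in at_right 0. f x < - eff_ratio_numer k f (y / 2)"
    using \<open>(f \<longlongrightarrow> 0) (at_right 0)\<close> neg by (intro order_tendstoD) auto
  moreover have "\<forall>\<^sub>F x in at_right 0. 0 < x \<and> x < y / 2"
    using assms unfolding eventually_at_right_field by (intro exI[of _ "y / 2"]) auto
  ultimately have "\<forall>\<^sub>F x in at_right (0::real). False"
    by eventually_elim (use lower upper in fastforce)
  then show False by simp
qed

lemma eff_ratio_numer_decreasing:
  assumes "x0 \<le> a" "a < b" "b \<le> 1 / k"
  shows "eff_ratio_numer k f b < eff_ratio_numer k f a"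
proof (rule DERIV_nonpos_imp_strictly_decreasing[OF _ _ _ assms])
  show "(eff_ratio_numer k f has_real_derivative
           x * ((1 - k * x) * deriv (deriv f) x - 2 * k * deriv f x)) (at x)"
    if "x0 \<le> x" "x \<le> 1 / k" for x
    using that x0 by (intro eff_ratio_numer_has_deriv) simp
  show "x * ((1 - k * x) * deriv (deriv f) x - 2 * k * deriv f x) \<le> 0"
    if "x0 < x" "x < 1 / k" for x
    using that x0 eff_ratio_numer_slope_nonpos(1)[OF that] by (simp add: mult_nonneg_nonpos)
  show "\<exists>z. u < z \<and> z < v \<and> z * ((1 - k * z) * deriv (deriv f) z - 2 * k * deriv f z) < 0"
    if "x0 \<le> u" "u < v" "v \<le> 1 / k" for u v
  proof -
    \<comment> \<open>since f is strictly increasing, deriv f is positive somewhere in every interval\<close>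
    have "\<exists>z. u < z \<and> z < v \<and> f v - f u = (v - u) * deriv f z"
      by (rule MVT2[OF \<open>u < v\<close>]) (use f_has_deriv that x0 in auto)
    then obtain z where z: "u < z" "z < v" "f v - f u = (v - u) * deriv f z"
      by blast
    have "0 < f v - f u" using f_less[of u v] that x0 by simp
    with z have "0 < deriv f z" using \<open>u < v\<close> by (simp add: zero_less_mult_iff)
    then have "(1 - k * z) * deriv (deriv f) z - 2 * k * deriv f z < 0"
      using eff_ratio_numer_slope_nonpos(2)[of z] z that by simp
    then show ?thesis using z that x0 by (intro exI[of _ z]) (simp add: mult_pos_neg)
  qed
qed

lemma eff_ratio_numer_neg_at_inverse: "eff_ratio_numer k f (1 / k) < 0"
  using f_less[of 0 "1 / k"] f0 k_pos by (simp add: eff_ratio_numer_def)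

lemma eff_ratio_numer_sign_change:
  obtains \<gamma> where "x0 < \<gamma>" "\<gamma> < 1 / k" "eff_ratio_numer k f \<gamma> = 0"
    "\<And>x. 0 < x \<Longrightarrow> x < \<gamma> \<Longrightarrow> 0 < eff_ratio_numer k f x"
    "\<And>x. \<gamma> < x \<Longrightarrow> x < 1 / k \<Longrightarrow> eff_ratio_numer k f x < 0"
proof -
  obtain \<gamma> where \<gamma>: "x0 \<le> \<gamma>" "\<gamma> \<le> 1 / k" "eff_ratio_numer k f \<gamma> = 0"
    using IVT2'[of "eff_ratio_numer k f" "1 / k" 0 x0] eff_ratio_numer_neg_at_inverse
      eff_ratio_numer_pos[of x0] eff_ratio_numer_cont x0 by force
  have "x0 < \<gamma>" "\<gamma> < 1 / k"
    using \<gamma> eff_ratio_numer_pos[of x0] eff_ratio_numer_neg_at_inverse x0 by (auto simp: order_le_less)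
  moreover have "0 < eff_ratio_numer k f x" if "0 < x" "x < \<gamma>" for x
    using that \<gamma> eff_ratio_numer_pos[of x] eff_ratio_numer_decreasing[of x \<gamma>] by (cases "x \<le> x0") auto
  moreover have "eff_ratio_numer k f x < 0" if "\<gamma> < x" "x < 1 / k" for x
    using that \<gamma> eff_ratio_numer_decreasing[of \<gamma> x] by simp
  ultimately show ?thesis using that \<gamma>(3) by blast
qed

end

lemma gamma_tilde_maximizes_eff_ratio:
  fixes f :: "real \<Rightarrow> real" and K :: nat
  defines "k \<equiv> real K - 1"
  assumes K2: "2 \<le> K" and sigm: "sigmoidal f" and f0: "f 0 = 0"
    and x0: "\<exists>x0. 0 < x0 \<and> x0 < 1 / k \<and>
              (\<forall>x. 0 < x \<and> x < x0 \<longrightarrow> deriv (deriv f) x / deriv f x - 2 * k / (1 - k * x) > 0) \<and>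
              (\<forall>x. x0 < x \<and> x < 1 / k \<longrightarrow> deriv (deriv f) x / deriv f x - 2 * k / (1 - k * x) < 0)"
  shows "0 < gamma_tilde f K" "gamma_tilde f K < 1 / k"
    and "\<And>x. 0 < x \<Longrightarrow> x < 1 / k \<Longrightarrow> x \<noteq> gamma_tilde f K \<Longrightarrow>
           eff_ratio k f x < eff_ratio k f (gamma_tilde f K)"
proof -
  have k_pos: "0 < k" using K2 unfolding k_def by simp
  obtain x0 where x0: "0 < x0" "x0 < 1 / k"
    "\<forall>x. 0 < x \<and> x < x0 \<longrightarrow> deriv (deriv f) x / deriv f x - 2 * k / (1 - k * x) > 0"
    "\<forall>x. x0 < x \<and> x < 1 / k \<longrightarrow> deriv (deriv f) x / deriv f x - 2 * k / (1 - k * x) < 0"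
    using x0 by blast
  have f: "continuous_on {0..} f" "\<forall>x>0. f differentiable (at x)"
    "\<forall>x>0. deriv f differentiable (at x)" "strict_mono_on {0..} f"
    using sigm unfolding sigmoidal_def by blast+
  obtain \<gamma> where \<gamma>: "x0 < \<gamma>" "\<gamma> < 1 / k" "eff_ratio_numer k f \<gamma> = 0"
    and pos: "\<And>x. 0 < x \<Longrightarrow> x < \<gamma> \<Longrightarrow> 0 < eff_ratio_numer k f x"
    and neg: "\<And>x. \<gamma> < x \<Longrightarrow> x < 1 / k \<Longrightarrow> eff_ratio_numer k f x < 0"
    using eff_ratio_numer_sign_change[OF k_pos f(1-4) f0 x0] by blast
  have gamma_tilde: "gamma_tilde f K = \<gamma>"
    unfolding gamma_tilde_def k_def[symmetric]
  proof (rule the_equality)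
    show "0 < \<gamma> \<and> \<gamma> < 1 / k \<and> \<gamma> * (1 - k * \<gamma>) * deriv f \<gamma> - f \<gamma> = 0"
      using \<gamma> x0 by (simp add: eff_ratio_numer_def)
    show "x = \<gamma>" if "0 < x \<and> x < 1 / k \<and> x * (1 - k * x) * deriv f x - f x = 0" for x
      using that pos[of x] neg[of x] unfolding eff_ratio_numer_def by (metis less_irrefl linorder_neqE)
  qed
  show "0 < gamma_tilde f K" "gamma_tilde f K < 1 / k"
    using gamma_tilde \<gamma> x0 by auto
  show "eff_ratio k f x < eff_ratio k f (gamma_tilde f K)"
    if "0 < x" "x < 1 / k" "x \<noteq> gamma_tilde f K" for x
    using DERIV_sign_change_imp_strict_max[of 0 "1 / k" "eff_ratio k f" "\<lambda>y. eff_ratio_numer k f y / y\<^sup>2" \<gamma> x]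
      eff_ratio_has_deriv[OF k_pos f(1-4) f0 x0] that gamma_tilde \<gamma> x0 pos neg
    by (force simp: divide_neg_pos)
qed

definition rx_power :: "complex^'k \<Rightarrow> real^'k \<Rightarrow> 'k \<Rightarrow> real" where
  "rx_power g p j = p$j * (cmod (g$j))\<^sup>2"

lemma card_UNIV_Diff_singleton: "real (card (UNIV - {i :: 'k :: finite})) = real CARD('k) - 1"
  by (simp add: card_Diff_singleton Suc_leI of_nat_diff)

lemma SINR_eq_rx_power:
  "SINR sigma2 g p i = rx_power g p i / ((\<Sum>j\<in>UNIV - {i}. rx_power g p j) + sigma2)"
  by (simp add: SINR_def rx_power_def)

lemma SINR_equal_rx_power:
  fixes g :: "complex^'k"
  assumes "\<And>j. rx_power g p j = w"
  shows "SINR sigma2 g p i = w / ((real CARD('k) - 1) * w + sigma2)"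
  using assms card_UNIV_Diff_singleton[of i] by (simp add: SINR_eq_rx_power)

lemma SINR_le_at_min_rx_power:
  fixes g :: "complex^'k" and p :: "real^'k" and i :: 'k
  defines "w \<equiv> rx_power g p i"
  assumes "0 < sigma2" "0 \<le> w" and min: "\<And>j. w \<le> rx_power g p j"
  shows "SINR sigma2 g p i \<le> w / ((real CARD('k) - 1) * w + sigma2)"
proof -
  have "(real CARD('k) - 1) * w \<le> (\<Sum>j\<in>UNIV - {i}. rx_power g p j)"
    using sum_bounded_below[of "UNIV - {i}" w "rx_power g p"] min card_UNIV_Diff_singleton[of i] by simp
  moreover have "0 < (real CARD('k) - 1) * w + sigma2"
    using assms by (simp add: add_nonneg_pos)
  ultimately show ?thesis
    unfolding SINR_eq_rx_power w_def[symmetric]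
    using \<open>0 \<le> w\<close> by (intro divide_left_mono mult_pos_pos) auto
qed

lemma rx_power_eq_if_SINR_eq_at_min:
  fixes g :: "complex^'k" and p :: "real^'k" and i :: 'k
  defines "w \<equiv> rx_power g p i"
  assumes "0 < sigma2" "0 < w" and min: "\<And>j. w \<le> rx_power g p j"
    and eq: "SINR sigma2 g p i = w / ((real CARD('k) - 1) * w + sigma2)"
  shows "rx_power g p j = w"
proof -
  have "0 < (real CARD('k) - 1) * w + sigma2"
    using assms by (simp add: add_nonneg_pos)
  moreover have "0 < (\<Sum>j\<in>UNIV - {i}. rx_power g p j) + sigma2"
    using assms min by (simp add: add_nonneg_pos order.trans[OF less_imp_le] sum_nonneg)
  ultimately have "(\<Sum>j\<in>UNIV - {i}. rx_power g p j) = (real CARD('k) - 1) * w"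
    using eq \<open>0 < w\<close> unfolding SINR_eq_rx_power w_def[symmetric] by (simp add: field_simps)
  then have "(\<Sum>j\<in>UNIV - {i}. rx_power g p j - w) = 0"
    using card_UNIV_Diff_singleton[of i] by (simp add: sum_subtractf)
  then have "\<forall>j\<in>UNIV - {i}. rx_power g p j - w = 0"
    using min by (subst (asm) sum_nonneg_eq_0_iff) auto
  then show ?thesis by (cases "j = i") (auto simp: w_def)
qed

lemma util_eq_rx_power:
  assumes "0 < (cmod (g$i))\<^sup>2"
  shows "util R f sigma2 g p i = R$i * (cmod (g$i))\<^sup>2 * f (SINR sigma2 g p i) / rx_power g p i"
  using assms by (cases "p$i = 0") (simp_all add: util_def rx_power_def)

lemma eff_ratio_balanced:
  fixes k w sigma2 :: real
  assumes "0 < w" "0 < sigma2" "0 \<le> k"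
  shows "eff_ratio k f (w / (k * w + sigma2)) = sigma2 / w * f (w / (k * w + sigma2))"
proof -
  define D where "D = k * w + sigma2"
  have "0 < D" using assms by (simp add: D_def add_nonneg_pos)
  then have "1 - k * (w / D) = sigma2 / D"
    by (simp add: D_def field_simps)
  then show ?thesis
    using \<open>0 < D\<close> \<open>0 < w\<close> unfolding D_def[symmetric] by (simp add: eff_ratio_def)
qed

lemma balanced_SINR_eq_iff:
  fixes k w sigma2 \<gamma> :: real
  assumes "0 < sigma2" "0 \<le> k" "0 \<le> w" "k * \<gamma> < 1"
  shows "w / (k * w + sigma2) = \<gamma> \<longleftrightarrow> w = sigma2 * \<gamma> / (1 - k * \<gamma>)"
proof -
  have "0 < k * w + sigma2" using assms by (simp add: add_nonneg_pos)
  then show ?thesis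
    using assms by (auto simp: field_simps)
qed

lemma rx_power_p_tilde:
  fixes g :: "complex^'k" and f :: "real \<Rightarrow> real"
  defines "\<gamma> \<equiv> gamma_tilde f CARD('k)" and "k \<equiv> real CARD('k) - 1"
  assumes "0 < (cmod (g$j))\<^sup>2"
  shows "rx_power g (p_tilde f sigma2 g) j = sigma2 * \<gamma> / (1 - k * \<gamma>)"
  using assms by (simp add: rx_power_def p_tilde_def)

lemma util_p_tilde:
  fixes g :: "complex^'k" and f :: "real \<Rightarrow> real"
  defines "\<gamma> \<equiv> gamma_tilde f CARD('k)" and "k \<equiv> real CARD('k) - 1"
  assumes "0 < sigma2" and g_pos: "\<forall>j. 0 < (cmod (g$j))\<^sup>2" and "0 < \<gamma>" "k * \<gamma> < 1"
  shows "util R f sigma2 g (p_tilde f sigma2 g) i = R$i * (cmod (g$i))\<^sup>2 / sigma2 * eff_ratio k f \<gamma>"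
proof -
  define W where "W = sigma2 * \<gamma> / (1 - k * \<gamma>)"
  have "0 < W" using assms by (simp add: W_def)
  have k: "0 \<le> k" by (simp add: k_def)
  have rx: "rx_power g (p_tilde f sigma2 g) j = W" for j
    using rx_power_p_tilde g_pos unfolding W_def \<gamma>_def k_def by blast
  have sinr: "W / (k * W + sigma2) = \<gamma>"
    using balanced_SINR_eq_iff[of sigma2 k W \<gamma>] assms k \<open>0 < W\<close> by (simp add: W_def)
  have "SINR sigma2 g (p_tilde f sigma2 g) i = \<gamma>"
    using SINR_equal_rx_power[OF rx] sinr unfolding k_def by simp
  then show ?thesis
    using util_eq_rx_power[of g i R f sigma2 "p_tilde f sigma2 g"] g_pos rx[of i]
      eff_ratio_balanced[OF \<open>0 < W\<close> \<open>0 < sigma2\<close> k, of f] sinr \<open>0 < sigma2\<close>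
    by simp
qed

lemma util_le_at_min_rx_power:
  fixes g :: "complex^'k" and p :: "real^'k" and i :: 'k and sigma2 :: real
  defines "k \<equiv> real CARD('k) - 1" and "w \<equiv> rx_power g p i"
  defines "s \<equiv> w / (k * w + sigma2)"
  assumes "0 < sigma2" "0 < (cmod (g$i))\<^sup>2" "0 < R$i" and f_mono: "strict_mono_on {0..} f"
    and "0 < w" and min: "\<And>j. w \<le> rx_power g p j"
  shows "util R f sigma2 g p i \<le> R$i * (cmod (g$i))\<^sup>2 / sigma2 * eff_ratio k f s"
    and "util R f sigma2 g p i = R$i * (cmod (g$i))\<^sup>2 / sigma2 * eff_ratio k f s \<Longrightarrow>
           rx_power g p j = w"
proof -
  have k: "0 \<le> k" by (simp add: k_def)
  have sinr_le: "SINR sigma2 g p i \<le> s"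
    using SINR_le_at_min_rx_power[of sigma2 g p i] assms by simp
  have "0 \<le> SINR sigma2 g p i"
    using min \<open>0 < w\<close> \<open>0 < sigma2\<close> unfolding SINR_eq_rx_power w_def[symmetric]
    by (intro divide_nonneg_pos add_nonneg_pos sum_nonneg) (auto intro: order.trans[OF less_imp_le])
  have a: "0 < R$i * (cmod (g$i))\<^sup>2" using assms by simp
  have util: "util R f sigma2 g p i = R$i * (cmod (g$i))\<^sup>2 * f (SINR sigma2 g p i) / w"
    using util_eq_rx_power assms unfolding w_def by blast
  have bound: "R$i * (cmod (g$i))\<^sup>2 / sigma2 * eff_ratio k f s = R$i * (cmod (g$i))\<^sup>2 * f s / w"
    using eff_ratio_balanced[OF \<open>0 < w\<close> \<open>0 < sigma2\<close> k, of f] assms unfolding s_def by simp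
  have "f (SINR sigma2 g p i) \<le> f s"
    using strict_mono_on_leD[OF f_mono] sinr_le \<open>0 \<le> SINR sigma2 g p i\<close> by auto
  then show "util R f sigma2 g p i \<le> R$i * (cmod (g$i))\<^sup>2 / sigma2 * eff_ratio k f s"
    unfolding util bound using a \<open>0 < w\<close> by (intro divide_right_mono mult_left_mono) auto
  assume "util R f sigma2 g p i = R$i * (cmod (g$i))\<^sup>2 / sigma2 * eff_ratio k f s"
  then have "f (SINR sigma2 g p i) = f s"
    unfolding util bound using a \<open>0 < w\<close> by auto
  then have "SINR sigma2 g p i = s"
    using strict_mono_onD[OF f_mono, of "SINR sigma2 g p i" s] sinr_le \<open>0 \<le> SINR sigma2 g p i\<close>
    by (cases "SINR sigma2 g p i < s") auto
  then show "rx_power g p j = w"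
    using rx_power_eq_if_SINR_eq_at_min[OF \<open>0 < sigma2\<close> \<open>0 < w\<close>[unfolded w_def] min[unfolded w_def]]
    unfolding s_def k_def w_def by blast
qed

lemma eq_p_tilde_if_util_ge_at_min_rx_power:
  fixes g :: "complex^'k" and R p :: "real^'k" and f :: "real \<Rightarrow> real" and i :: 'k
    and sigma2 :: real
  defines "\<gamma> \<equiv> gamma_tilde f CARD('k)" and "k \<equiv> real CARD('k) - 1"
  assumes "0 < sigma2" and g_pos: "\<forall>j. 0 < (cmod (g$j))\<^sup>2" and "0 < R$i"
    and f_mono: "strict_mono_on {0..} f"
    and \<gamma>: "0 < \<gamma>" "\<gamma> < 1 / k"
    and max: "\<And>x. 0 < x \<Longrightarrow> x < 1 / k \<Longrightarrow> x \<noteq> \<gamma> \<Longrightarrow> eff_ratio k f x < eff_ratio k f \<gamma>"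
    and p_pos: "0 < p$i" and min: "\<forall>j. rx_power g p i \<le> rx_power g p j"
    and ge: "util R f sigma2 g (p_tilde f sigma2 g) i \<le> util R f sigma2 g p i"
  shows "p = p_tilde f sigma2 g"
proof -
  define w where "w = rx_power g p i"
  define s where "s = w / (k * w + sigma2)"
  define C where "C = R$i * (cmod (g$i))\<^sup>2 / sigma2"
  have "0 < w" using p_pos g_pos by (simp add: w_def rx_power_def)
  have "0 \<le> k" by (simp add: k_def)
  with \<gamma> have "0 < k" by (cases "k = 0") auto
  then have "k * \<gamma> < 1" using \<gamma> by (simp add: field_simps)
  have "0 < k * w + sigma2"
    using \<open>0 < w\<close> \<open>0 < k\<close> \<open>0 < sigma2\<close> by (intro add_pos_pos mult_pos_pos)
  then have s: "0 < s" "s < 1 / k"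
    using \<open>0 < w\<close> \<open>0 < k\<close> \<open>0 < sigma2\<close> by (auto simp: s_def field_simps)
  have "0 < C" using \<open>0 < sigma2\<close> \<open>0 < R$i\<close> g_pos by (simp add: C_def)
  have tilde: "util R f sigma2 g (p_tilde f sigma2 g) i = C * eff_ratio k f \<gamma>"
    using util_p_tilde[of sigma2 g f R i] \<open>0 < sigma2\<close> g_pos \<gamma> \<open>k * \<gamma> < 1\<close>
    unfolding C_def \<gamma>_def k_def by blast
  have min': "\<And>j. rx_power g p i \<le> rx_power g p j" using min by blast
  have le: "util R f sigma2 g p i \<le> C * eff_ratio k f s"
    unfolding C_def s_def w_def k_def
    by (rule util_le_at_min_rx_power(1)[OF \<open>0 < sigma2\<close> _ \<open>0 < R$i\<close> f_mono _ min'])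
      (use g_pos \<open>0 < w\<close> w_def in auto)
  have "s = \<gamma>"
  proof (rule ccontr)
    assume "s \<noteq> \<gamma>"
    then have "C * eff_ratio k f s < C * eff_ratio k f \<gamma>"
      using max[OF s] \<open>0 < C\<close> by simp
    with ge le tilde show False by simp
  qed
  then have util_eq: "util R f sigma2 g p i = C * eff_ratio k f s"
    using ge le tilde by simp
  have rx: "rx_power g p j = w" for j
    unfolding w_def
    by (rule util_le_at_min_rx_power(2)[OF \<open>0 < sigma2\<close> _ \<open>0 < R$i\<close> f_mono _ min'
          util_eq[unfolded C_def s_def w_def k_def]])
      (use g_pos \<open>0 < w\<close> w_def in auto)
  have "w = sigma2 * \<gamma> / (1 - k * \<gamma>)"
    using balanced_SINR_eq_iff[of sigma2 k w \<gamma>] \<open>s = \<gamma>\<close> \<open>0 < w\<close> \<open>0 < k\<close> \<open>k * \<gamma> < 1\<close> \<open>0 < sigma2\<close>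
    by (simp add: s_def)
  then have "rx_power g p j = rx_power g (p_tilde f sigma2 g) j" for j
    using rx_power_p_tilde[of g j f sigma2] rx g_pos by (simp add: \<gamma>_def k_def)
  then show ?thesis
    using g_pos by (simp add: vec_eq_iff rx_power_def)
qed

theorem proposition5:
  fixes g :: "complex^'k" and R Pmax :: "real^'k"
    and sigma2 umax :: real and f :: "real \<Rightarrow> real"
  assumes K2: "CARD('k) \<ge> 2"
    and sigma_pos: "sigma2 > 0"
    and g_pos: "\<forall>i. (cmod (g$i))^2 > 0"
    and R_pos: "\<forall>i. R$i > 0"
    and sigm: "sigmoidal f"
    and f0: "f 0 = 0"
    and x0: "\<exists>x0. 0 < x0 \<and> x0 < 1 / (real CARD('k) - 1) \<and>
              (\<forall>x. 0 < x \<and> x < x0 \<longrightarrow>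
                 deriv (deriv f) x / deriv f x - 2 * (real CARD('k) - 1) / (1 - (real CARD('k) - 1) * x) > 0) \<and>
              (\<forall>x. x0 < x \<and> x < 1 / (real CARD('k) - 1) \<longrightarrow>
                 deriv (deriv f) x / deriv f x - 2 * (real CARD('k) - 1) / (1 - (real CARD('k) - 1) * x) < 0)"
    and Pmax_large: "\<forall>i. (p_tilde f sigma2 g :: real^'k)$i \<le> Pmax$i"
    and umax: "util_region R f sigma2 g Pmax \<subseteq> {v. \<forall>i. 0 \<le> v$i \<and> v$i \<le> umax}"
    and cvx: "convex (util_region R f sigma2 g Pmax) \<or>
              convex ({v. \<forall>i. 0 \<le> v$i \<and> v$i \<le> umax} - util_region R f sigma2 g Pmax)"
  shows "\<not> (\<exists>p\<in>feasible Pmax.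
              (\<forall>i. util R f sigma2 g p i \<ge> util R f sigma2 g (p_tilde f sigma2 g) i) \<and>
              (\<exists>i. util R f sigma2 g p i > util R f sigma2 g (p_tilde f sigma2 g) i))"
proof
  assume "\<exists>p\<in>feasible Pmax.
              (\<forall>i. util R f sigma2 g p i \<ge> util R f sigma2 g (p_tilde f sigma2 g) i) \<and>
              (\<exists>i. util R f sigma2 g p i > util R f sigma2 g (p_tilde f sigma2 g) i)"
  then obtain p where p: "p \<in> feasible Pmax"
    and ge: "\<forall>i. util R f sigma2 g p i \<ge> util R f sigma2 g (p_tilde f sigma2 g) i"
    and strict: "\<exists>i. util R f sigma2 g p i > util R f sigma2 g (p_tilde f sigma2 g) i"
    by blast
  obtain i where weakest: "\<forall>j. rx_power g p i \<le> rx_power g p j"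
    using ex_is_arg_min_if_finite[of UNIV "rx_power g p"] by (auto simp: is_arg_min_linorder)
  have "strict_mono_on {0..} f"
    using sigm by (simp add: sigmoidal_def)
  moreover have "0 < p$i"
    using p by (simp add: feasible_def)
  ultimately have "p = p_tilde f sigma2 g"
    using eq_p_tilde_if_util_ge_at_min_rx_power[OF sigma_pos g_pos R_pos[rule_format]]
      gamma_tilde_maximizes_eff_ratio[OF K2 sigm f0 x0] weakest ge
    by blast
  with strict show False by simp
qed

end
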